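(* Let $r:\mathcal T\to\mathbb N\cup\{0\}$ be a function satisfying: (1) $r(\mathscr X)=0$ iff $\mathscr X=\mathbf 0$, and $r(\mathscr X)=1$ iff $\mathscr X$ is a rank-one tensor; (2) $r$ is constant on equivalence classes of $\sim$; (3) if $\mathscr X\in\mathbb R^{I_1\times\cdots\times I_N}$ has exactly two modes $n_1<n_2$ with $I_{n_1}>1$ and $I_{n_2}>1$, and $\mathbf X\in\mathbb R^{I_{n_1}\times I_{n_2}}$ is the matrix associated to $\mathscr X$, then $r(\mathscr X)=\operatorname{rank}(\mathbf X)$; (4) if $\mathscr X\in\mathbb R^{I_1\times\cdots\times I_N}$ is nonzero, not rank-one, and has at least three modes $n$ with $I_n>1$, then $r(\mathscr X)=\max\{I_1,\dots,I_N\}$. Then $r$ is a QZC rank function.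
   Context: $\mathcal T$ is the collection of all real tensors (of all orders $N\ge1$ and all sizes). A rank-one tensor is one of the form $x_{i_1\cdots i_N}=a^{(1)}_{i_1}\cdots a^{(N)}_{i_N}$ with all $\mathbf a^{(n)}$ nonzero vectors. $\mathscr I_{M,N}$ is the order-$N$ tensor of size $M\times\cdots\times M$ with $1$ in positions $(i,\dots,i)$ and $0$ elsewhere. A subtensor of $\mathscr X\in\mathbb R^{I_1\times\cdots\times I_N}$ is a tensor $\mathscr Y\in\mathbb R^{J_1\times\cdots\times J_N}$ with $y_{j_1\cdots j_N}=x_{i_{1j_1}\cdots i_{Nj_N}}$ for some indices $1\le i_{n1}<\cdots<i_{nJ_n}\le I_n$. For $\pi\in S_N$, the mode-permutation of $\mathscr X$ is the tensor $\mathscr Y$ with $y_{i_1\cdots i_N}=x_{i_{\pi(1)}\cdots i_{\pi(N)}}$. The relation $\sim$ is the smallest equivalence relation on $\mathcal T$ with $\mathscr X\sim\alpha\mathscr X$ for all $\alpha\in\mathbb R\setminus\{0\}$ and $\mathscr X\sim\mathscr Y$ whenever $\mathscr Y$ is a mode-permutation of $\mathscr X$. A QZC rank function is a function $s:\mathcal T\to\mathbb N\cup\{0\}$ such that: (QZC1) $s(\mathscr X)=0$ iff $\mathscr X=\mathbf 0$, and $s(\mathscr X)=1$ iff $\mathscr X$ is rank-one; (QZC2) $s(\mathscr I_{M,N})=M$ whenever $N\ge2$; (QZC3) if $\mathscr X\in\mathbb R^{I_1\times I_2\times1\times\cdots\times1}$ then $s(\mathscr X)$ equals the rank of the corresponding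 $I_1\times I_2$ matrix; (QZC4) $s(\alpha\mathscr X)=s(\mathscr X)$ for $\alpha\ne0$; (QZC5) $s$ is invariant under mode-permutations; (QZC6) $s(\mathscr Y)\le s(\mathscr X)$ whenever $\mathscr Y$ is a subtensor of $\mathscr X$. *)

theory Defs
  imports "Jordan_Normal_Form.DL_Rank" "HOL-Combinatorics.Permutations"
begin

text \<open>A real tensor of order N = length d and size d!0 x ... x d!(N-1) is represented by the
pair (d, f) where f gives the entries at 0-based multi-indices and is 0 outside the index range.\<close>

type_synonym tensor = "nat list \<times> (nat list \<Rightarrow> real)"

definition dims :: "tensor \<Rightarrow> nat list" where "dims X = fst X"
definition entry :: "tensor \<Rightarrow> nat list \<Rightarrow> real" where "entry X = snd X"

definition valid_idx :: "nat list \<Rightarrow> nat list \<Rightarrow> bool" where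
  "valid_idx d is \<longleftrightarrow> length is = length d \<and> (\<forall>k<length d. is ! k < d ! k)"

definition is_tensor :: "tensor \<Rightarrow> bool" where
  "is_tensor X \<longleftrightarrow> dims X \<noteq> [] \<and> (\<forall>k\<in>set (dims X). 0 < k)
      \<and> (\<forall>is. \<not> valid_idx (dims X) is \<longrightarrow> entry X is = 0)"

definition is_zero :: "tensor \<Rightarrow> bool" where
  "is_zero X \<longleftrightarrow> (\<forall>is. entry X is = 0)"

definition rank_one :: "tensor \<Rightarrow> bool" where
  "rank_one X \<longleftrightarrow> (\<exists>a :: nat \<Rightarrow> nat \<Rightarrow> real.
      (\<forall>n<length (dims X). \<exists>i<dims X ! n. a n i \<noteq> 0) \<and>
      (\<forall>is. valid_idx (dims X) is \<longrightarrow> entry X is = (\<Prod>n<length (dims X). a n (is ! n))))"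

definition scale_tensor :: "real \<Rightarrow> tensor \<Rightarrow> tensor" where
  "scale_tensor \<alpha> X = (dims X, \<lambda>is. \<alpha> * entry X is)"

text \<open>Mode-permutation by \<pi> \<in> S_N (acting on {0..<N}):
  y_{i_1..i_N} = x_{i_{\<pi>(1)}..i_{\<pi>(N)}}; hence the size of Y in mode \<pi>(k) is I_k.\<close>
definition mode_perm :: "(nat \<Rightarrow> nat) \<Rightarrow> tensor \<Rightarrow> tensor" where
  "mode_perm \<pi> X = (let N = length (dims X); d' = map (\<lambda>j. dims X ! inv_into UNIV \<pi> j) [0..<N] in
     (d', \<lambda>is. if valid_idx d' is then entry X (map (\<lambda>k. is ! \<pi> k) [0..<N]) else 0))"

definition is_mode_perm :: "tensor \<Rightarrow> tensor \<Rightarrow> bool" where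
  "is_mode_perm Y X \<longleftrightarrow> (\<exists>\<pi>. \<pi> permutes {..<length (dims X)} \<and> Y = mode_perm \<pi> X)"

inductive tsim :: "tensor \<Rightarrow> tensor \<Rightarrow> bool" where
  tsim_refl: "is_tensor X \<Longrightarrow> tsim X X"
| tsim_scale: "is_tensor X \<Longrightarrow> \<alpha> \<noteq> 0 \<Longrightarrow> tsim X (scale_tensor \<alpha> X)"
| tsim_perm: "is_tensor X \<Longrightarrow> is_mode_perm Y X \<Longrightarrow> tsim X Y"
| tsim_sym: "tsim X Y \<Longrightarrow> tsim Y X"
| tsim_trans: "tsim X Y \<Longrightarrow> tsim Y Z \<Longrightarrow> tsim X Z"

definition diag_tensor :: "nat \<Rightarrow> nat \<Rightarrow> tensor" where
  "diag_tensor M N = (replicate N M,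
     \<lambda>is. if valid_idx (replicate N M) is \<and> (\<forall>k<N. is ! k = is ! 0) then 1 else 0)"

definition is_subtensor :: "tensor \<Rightarrow> tensor \<Rightarrow> bool" where
  "is_subtensor Y X \<longleftrightarrow> is_tensor Y \<and> length (dims Y) = length (dims X) \<and>
     (\<exists>\<sigma> :: nat \<Rightarrow> nat \<Rightarrow> nat.
        (\<forall>n<length (dims X). strict_mono_on {..<dims Y ! n} (\<sigma> n) \<and>
                              (\<forall>j<dims Y ! n. \<sigma> n j < dims X ! n)) \<and>
        (\<forall>is. valid_idx (dims Y) is \<longrightarrow>
              entry Y is = entry X (map (\<lambda>n. \<sigma> n (is ! n)) [0..<length (dims X)])))"

text \<open>Rank of a real matrix of variable size (Jordan_Normal_Form: dimension of the column space).\<close>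
definition mat_rank :: "real mat \<Rightarrow> nat" where
  "mat_rank A = vec_space.rank (dim_row A) A"

definition assoc_matrix :: "tensor \<Rightarrow> nat \<Rightarrow> nat \<Rightarrow> real mat" where
  "assoc_matrix X n1 n2 = mat (dims X ! n1) (dims X ! n2)
     (\<lambda>(i, j). entry X ((replicate (length (dims X)) 0)[n1 := i, n2 := j]))"

definition qzc_rank :: "(tensor \<Rightarrow> nat) \<Rightarrow> bool" where
  "qzc_rank s \<longleftrightarrow>
     (\<forall>X. is_tensor X \<longrightarrow> ((s X = 0 \<longleftrightarrow> is_zero X) \<and> (s X = 1 \<longleftrightarrow> rank_one X))) \<and>
     (\<forall>M N. 1 \<le> M \<longrightarrow> 2 \<le> N \<longrightarrow> s (diag_tensor M N) = M) \<and>
     (\<forall>X. is_tensor X \<longrightarrow> 2 \<le> length (dims X) \<longrightarrow>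
          (\<forall>k. 2 \<le> k \<longrightarrow> k < length (dims X) \<longrightarrow> dims X ! k = 1) \<longrightarrow>
          s X = mat_rank (assoc_matrix X 0 1)) \<and>
     (\<forall>X \<alpha>. is_tensor X \<longrightarrow> \<alpha> \<noteq> 0 \<longrightarrow> s (scale_tensor \<alpha> X) = s X) \<and>
     (\<forall>X Y. is_tensor X \<longrightarrow> is_mode_perm Y X \<longrightarrow> s Y = s X) \<and>
     (\<forall>X Y. is_tensor X \<longrightarrow> is_subtensor Y X \<longrightarrow> s Y \<le> s X)"

end

(*
  Call a mode nontrivial if its size exceeds one. A nonzero tensor with at most one nontrivial
  mode is rank one, so conditions (1), (3) and (4) determine r on every tensor: by (1) on zero and
  rank-one tensors, by (3) on the remaining tensors with two nontrivial modes, and by (4) on the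
  rest. Consequently r X never exceeds the largest dimension of X, a matrix rank being bounded by
  the number of columns.

  QZC1, QZC4 and QZC5 are hypotheses (1) and (2); QZC2 and QZC3 are read off the case
  distinction. For QZC6, a subtensor Y of X has no more nontrivial modes than X. If X has at least
  three, r Y <= max dims Y <= max dims X = r X. Otherwise both have the same two nontrivial modes,
  the matrix of Y is a submatrix of the matrix of X, and passing to a submatrix cannot increase
  the rank: a full-rank selection of columns of the submatrix lifts to linearly independent
  columns of the big matrix.
*)
theory Submission
  imports Defs
begin

section \<open>Rank of submatrices\<close>

context vec_space
begin

lemma maximal_lin_indpt_cols_exists:
  obtains S where "maximal S (\<lambda>T. T \<subseteq> set (cols A) \<and> lin_indpt T)"
  using maximal_exists[of "\<lambda>T. T \<subseteq> set (cols A) \<and> lin_indpt T" "card (set (cols A))" "{}"]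
  by (meson List.finite_set card_mono empty_iff empty_subsetI finite_lin_indpt2 rev_finite_subset)

lemma distinct_cols_if_full_rank:
  assumes A: "A \<in> carrier_mat n nc" and full: "rank A = nc"
  shows "distinct (cols A)"
proof -
  obtain S where S: "maximal S (\<lambda>T. T \<subseteq> set (cols A) \<and> lin_indpt T)"
    using maximal_lin_indpt_cols_exists .
  then have "nc \<le> card (set (cols A))"
    using rank_card_indpt[OF A S] full card_mono[of "set (cols A)" S] unfolding maximal_def by auto
  then show ?thesis using A card_distinct by (metis antisym card_length cols_length carrier_matD(2))
qed

lemma rank_le_if_cols_subset:
  assumes A: "A \<in> carrier_mat n nc" and C: "C \<in> carrier_mat n k"
    and sub: "set (cols C) \<subseteq> set (cols A)"
  shows "rank C \<le> rank A"
proof -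
  obtain S where S: "maximal S (\<lambda>T. T \<subseteq> set (cols C) \<and> lin_indpt T)"
    using maximal_lin_indpt_cols_exists .
  then have "S \<subseteq> set (cols A)" "lin_indpt S" using sub unfolding maximal_def by auto
  then show ?thesis using rank_card_indpt[OF C S] rank_ge_card_indpt[OF A] by simp
qed

lemma full_rank_col_selection_exists:
  assumes B: "B \<in> carrier_mat n k"
  obtains js where "set js \<subseteq> {..<k}" "length js = rank B"
    "rank (mat n (rank B) (\<lambda>(i, t). B $$ (i, js ! t))) = rank B"
proof -
  obtain S where S: "maximal S (\<lambda>T. T \<subseteq> set (cols B) \<and> lin_indpt T)"
    using maximal_lin_indpt_cols_exists .
  have SB: "S \<subseteq> set (cols B)" and indpt: "lin_indpt S" using S unfolding maximal_def by auto
  obtain xs where xs: "distinct xs" "set xs = S"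
    using finite_distinct_list finite_subset[OF SB] by blast
  have "\<exists>j<k. x = col B j" if "x \<in> set xs" for x
    using that xs SB B by (metis cols_length cols_nth in_set_conv_nth carrier_matD(2) subsetD)
  then obtain col_idx where col_idx: "\<And>x. x \<in> set xs \<Longrightarrow> col_idx x < k \<and> x = col B (col_idx x)"
    by metis
  define js where "js = map col_idx xs"
  have rank: "rank B = length xs" using rank_card_indpt[OF B S] xs distinct_card by metis
  have xs_col: "xs ! t $ i = B $$ (i, js ! t)" if "t < length xs" "i < n" for t i
    using col_idx[OF nth_mem[OF that(1)]] B that by (metis carrier_matD index_col js_def nth_map)
  have "mat n (rank B) (\<lambda>(i, t). B $$ (i, js ! t)) = mat_of_cols n xs"
    by (rule eq_matI) (auto simp: rank mat_of_cols_def xs_col)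
  moreover have "mat_of_cols n xs \<in> carrier_mat n (length xs)" by simp
  moreover have "cols (mat_of_cols n xs) = xs"
    using SB xs B cols_dim by (intro cols_mat_of_cols) blast
  ultimately show ?thesis
    using that[of js] col_idx lin_indpt_full_rank rank xs indpt by (auto simp: js_def)
qed

end

lemma rank_eq_dim_col_of_row_selection:
  fixes C :: "'a::field mat"
  assumes C: "C \<in> carrier_mat n r" and f: "\<And>i. i < m \<Longrightarrow> f i < n"
    and full: "vec_space.rank m (mat m r (\<lambda>(i, t). C $$ (f i, t))) = r"
  shows "vec_space.rank n C = r"
proof -
  define R where "R = mat m r (\<lambda>(i, t). C $$ (f i, t))"
  define restrict :: "'a vec \<Rightarrow> 'a vec" where "restrict x = vec m (\<lambda>i. x $ f i)" for x
  have R: "R \<in> carrier_mat m r" unfolding R_def by simp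
  have dist_R: "distinct (cols R)" using vec_space.distinct_cols_if_full_rank[OF R] full R_def by simp
  have "cols R = map restrict (cols C)"
    by (rule nth_equalityI) (use C in \<open>auto simp: R_def restrict_def f\<close>)
  then have dist: "distinct (cols C)" using dist_R distinct_map by metis
  have "v = 0\<^sub>v r" if v: "v \<in> carrier_vec r" "C *\<^sub>v v = 0\<^sub>v n" for v
  proof -
    have "R *\<^sub>v v = restrict (C *\<^sub>v v)"
      using v(1) C by (intro eq_vecI) (auto simp: restrict_def f R_def scalar_prod_def row_def)
    also have "\<dots> = 0\<^sub>v m" using v(2) f by (auto simp: restrict_def)
    finally show ?thesis
      using vec_space.lin_depI[OF R v(1) _ _ dist_R] vec_space.full_rank_lin_indpt[OF R _ dist_R] full R_def
      by blast
  qed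
  then show ?thesis
    using vec_space.lin_indpt_full_rank[OF C dist] vec_space.lin_depE[OF C _ dist] by metis
qed

lemma rank_submatrix_le:
  fixes A :: "'a::field mat"
  assumes A: "A \<in> carrier_mat n nc"
    and f: "\<And>i. i < m \<Longrightarrow> f i < n" and g: "\<And>j. j < k \<Longrightarrow> g j < nc"
  shows "vec_space.rank m (mat m k (\<lambda>(i, j). A $$ (f i, g j))) \<le> vec_space.rank n A"
    (is "vec_space.rank m ?B \<le> _")
proof -
  define r where "r = vec_space.rank m ?B"
  obtain js where js: "set js \<subseteq> {..<k}" "length js = r"
    and full: "vec_space.rank m (mat m r (\<lambda>(i, t). ?B $$ (i, js ! t))) = r"
    using vec_space.full_rank_col_selection_exists[of ?B m k] unfolding r_def by auto
  define C where "C = mat n r (\<lambda>(i, t). A $$ (i, g (js ! t)))"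
  have C: "C \<in> carrier_mat n r" unfolding C_def by simp
  have js_lt: "js ! t < k" if "t < r" for t using js that nth_mem by blast
  have "mat m r (\<lambda>(i, t). ?B $$ (i, js ! t)) = mat m r (\<lambda>(i, t). C $$ (f i, t))"
    by (rule eq_matI) (auto simp: C_def f js_lt)
  then have "vec_space.rank n C = r" using rank_eq_dim_col_of_row_selection[OF C f] full by simp
  moreover have "set (cols C) \<subseteq> set (cols A)"
  proof
    fix c assume "c \<in> set (cols C)"
    then obtain t where t: "t < r" "c = col C t" using C by (auto simp: in_set_conv_nth)
    then have "c = col A (g (js ! t))" using A by (auto simp: C_def js_lt g)
    then show "c \<in> set (cols A)" using A g js_lt[OF t(1)] by (metis cols_length cols_nth nth_mem carrier_matD(2))
  qed
  ultimately show ?thesis using vec_space.rank_le_if_cols_subset[OF A C] unfolding r_def by metis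
qed

lemma mat_rank_submatrix_le:
  fixes A :: "real mat"
  assumes "\<And>i. i < m \<Longrightarrow> f i < dim_row A" and "\<And>j. j < k \<Longrightarrow> g j < dim_col A"
  shows "mat_rank (mat m k (\<lambda>(i, j). A $$ (f i, g j))) \<le> mat_rank A"
proof -
  have "A \<in> carrier_mat (dim_row A) (dim_col A)" by simp
  from rank_submatrix_le[OF this assms] show ?thesis unfolding mat_rank_def by simp
qed

lemma mat_rank_le_dim_col: "mat_rank A \<le> dim_col A"
  unfolding mat_rank_def by (rule vec_space.rank_le_nc) (rule carrier_matI, auto)

lemma mat_rank_one_mat: "mat_rank (1\<^sub>m M) = M"
  unfolding mat_rank_def using vec_space.det_rank_iff[of "1\<^sub>m M :: real mat" M] by simp

lemma mat_rank_eq_0: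
  assumes "\<And>i j. i < dim_row A \<Longrightarrow> j < dim_col A \<Longrightarrow> A $$ (i, j) = 0"
  shows "mat_rank A = 0"
proof -
  have "A = 0\<^sub>m (dim_row A) (dim_col A)" using assms by (intro eq_matI) auto
  then show ?thesis unfolding mat_rank_def using vec_space.rank_0I by metis
qed

lemma one_le_mat_rank:
  assumes "i < dim_row A" "j < dim_col A" "A $$ (i, j) \<noteq> 0"
  shows "1 \<le> mat_rank A"
proof -
  let ?E = "mat 1 1 (\<lambda>(_, _). A $$ (i, j))"
  have "det ?E \<noteq> 0" using assms by (subst det_single) auto
  then have "mat_rank ?E = 1"
    unfolding mat_rank_def using vec_space.det_rank_iff[of ?E 1] by simp
  moreover have "mat_rank ?E \<le> mat_rank A"
    by (rule mat_rank_submatrix_le) (use assms in auto)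
  ultimately show ?thesis by simp
qed

lemma mat_rank_le_1:
  assumes "dim_row A = 1 \<or> dim_col A = 1"
  shows "mat_rank A \<le> 1"
proof -
  have A: "A \<in> carrier_mat (dim_row A) (dim_col A)" by auto
  from assms show ?thesis
  proof
    assume "dim_row A = 1"
    then show ?thesis unfolding mat_rank_def
      by (intro vec_space.rank_le_1_product_entries[OF A, of "\<lambda>_. 1" "\<lambda>c. A $$ (0, c)"]) auto
  next
    assume "dim_col A = 1"
    then show ?thesis unfolding mat_rank_def
      by (intro vec_space.rank_le_1_product_entries[OF A, of "\<lambda>r. A $$ (r, 0)" "\<lambda>_. 1"]) auto
  qed
qed

section \<open>Nontrivial modes\<close>

lemma card_2_obtain_less:
  fixes S :: "'a::linorder set"
  assumes "card S = 2"
  obtains x y where "x < y" "S = {x, y}"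
  using assms by (metis card_2_iff insert_commute linorder_neqE)

definition nontrivial_modes :: "tensor \<Rightarrow> nat set" where
  "nontrivial_modes X = {n. n < length (dims X) \<and> 1 < dims X ! n}"

lemma finite_nontrivial_modes [simp]: "finite (nontrivial_modes X)"
  unfolding nontrivial_modes_def by auto

lemma valid_idx_if_entry_nonzero: "is_tensor X \<Longrightarrow> entry X is \<noteq> 0 \<Longrightarrow> valid_idx (dims X) is"
  unfolding is_tensor_def by auto

lemma dims_pos: "is_tensor X \<Longrightarrow> n < length (dims X) \<Longrightarrow> 0 < dims X ! n"
  unfolding is_tensor_def by auto

lemma valid_idx_trivial_mode:
  "valid_idx (dims X) is \<Longrightarrow> k < length (dims X) \<Longrightarrow> k \<notin> nontrivial_modes X \<Longrightarrow> is ! k = 0"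
  unfolding valid_idx_def nontrivial_modes_def by fastforce

lemma entry_eq_assoc_matrix:
  assumes v: "valid_idx (dims X) is" and n: "n1 \<noteq> n2" "n1 < length (dims X)" "n2 < length (dims X)"
    and modes: "nontrivial_modes X \<subseteq> {n1, n2}"
  shows "entry X is = assoc_matrix X n1 n2 $$ (is ! n1, is ! n2)"
proof -
  have "is = (replicate (length (dims X)) 0)[n1 := is ! n1, n2 := is ! n2]"
    using v n modes valid_idx_trivial_mode[OF v]
    by (intro nth_equalityI) (auto simp: valid_idx_def nth_list_update)
  moreover have "is ! n1 < dims X ! n1" "is ! n2 < dims X ! n2" using v n unfolding valid_idx_def by auto
  ultimately show ?thesis unfolding assoc_matrix_def by simp
qed

lemma rank_one_if_nontrivial_modes_subset:
  assumes T: "is_tensor X" and nz: "\<not> is_zero X" and m: "m < length (dims X)"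
    and modes: "nontrivial_modes X \<subseteq> {m}"
  shows "rank_one X"
proof -
  obtain i0 where i0: "entry X i0 \<noteq> 0" using nz unfolding is_zero_def by auto
  have v0: "valid_idx (dims X) i0" using valid_idx_if_entry_nonzero[OF T i0] .
  define a where "a n i = (if n = m then entry X (i0[m := i]) else 1)" for n i
  have idx: "is = i0[m := is ! m]" if v: "valid_idx (dims X) is" for "is"
  proof (rule nth_equalityI)
    show "length is = length (i0[m := is ! m])" using v v0 by (simp add: valid_idx_def)
    fix k assume "k < length is"
    moreover have "k \<notin> nontrivial_modes X" if "k \<noteq> m" using modes that by blast
    ultimately show "is ! k = i0[m := is ! m] ! k"
      using v v0 valid_idx_trivial_mode[OF v, of k] valid_idx_trivial_mode[OF v0, of k]
      by (cases "k = m") (auto simp: valid_idx_def)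
  qed
  show ?thesis unfolding rank_one_def
  proof (intro exI[of _ a] conjI allI impI)
    fix n assume n: "n < length (dims X)"
    show "\<exists>i<dims X ! n. a n i \<noteq> 0"
    proof (cases "n = m")
      case True
      then show ?thesis using v0 n i0 unfolding a_def valid_idx_def by (intro exI[of _ "i0 ! m"]) auto
    qed (use dims_pos[OF T n] a_def in auto)
  next
    fix "is" assume "valid_idx (dims X) is"
    then show "entry X is = (\<Prod>n<length (dims X). a n (is ! n))"
      using m idx unfolding a_def by (simp add: prod.If_cases)
  qed
qed

lemma two_le_card_nontrivial_modes:
  assumes T: "is_tensor X" and nz: "\<not> is_zero X" and nr: "\<not> rank_one X"
  shows "2 \<le> card (nontrivial_modes X)"
proof (rule ccontr)
  assume "\<not> 2 \<le> card (nontrivial_modes X)"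
  then have card: "card (nontrivial_modes X) \<le> Suc 0" by simp
  obtain m where "m < length (dims X)" "nontrivial_modes X \<subseteq> {m}"
  proof (cases "nontrivial_modes X = {}")
    case True
    then show ?thesis using that[of 0] T unfolding is_tensor_def by auto
  next
    case False
    then obtain m where "m \<in> nontrivial_modes X" by auto
    then show ?thesis using that[of m] card card_le_Suc0_iff_eq[of "nontrivial_modes X"]
      unfolding nontrivial_modes_def by auto
  qed
  then show False using rank_one_if_nontrivial_modes_subset[OF T nz] nr by blast
qed

section \<open>Subtensors\<close>

lemma subtensor_dims_le:
  assumes S: "is_subtensor Y X" and n: "n < length (dims X)"
  shows "dims Y ! n \<le> dims X ! n"
proof -
  obtain \<sigma> where "strict_mono_on {..<dims Y ! n} (\<sigma> n)" "\<sigma> n ` {..<dims Y ! n} \<subseteq> {..<dims X ! n}"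
    using S n unfolding is_subtensor_def by fastforce
  then have "card {..<dims Y ! n} \<le> card {..<dims X ! n}"
    by (intro card_inj_on_le strict_mono_on_imp_inj_on) auto
  then show ?thesis by simp
qed

lemma nontrivial_modes_subtensor:
  assumes S: "is_subtensor Y X"
  shows "nontrivial_modes Y \<subseteq> nontrivial_modes X"
proof
  fix n assume "n \<in> nontrivial_modes Y"
  moreover have "length (dims Y) = length (dims X)" using S unfolding is_subtensor_def by simp
  ultimately show "n \<in> nontrivial_modes X"
    using subtensor_dims_le[OF S, of n] unfolding nontrivial_modes_def by auto
qed

lemma Max_dims_subtensor_le:
  assumes S: "is_subtensor Y X"
  shows "Max (set (dims Y)) \<le> Max (set (dims X))"
proof (rule Max.boundedI)
  show "set (dims Y) \<noteq> {}" using S unfolding is_subtensor_def is_tensor_def by simp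
  have len: "length (dims Y) = length (dims X)" using S unfolding is_subtensor_def by simp
  fix y assume "y \<in> set (dims Y)"
  then obtain n where n: "n < length (dims Y)" "y = dims Y ! n" by (auto simp: in_set_conv_nth)
  then have "y \<le> dims X ! n" using subtensor_dims_le[OF S] len by simp
  also have "\<dots> \<le> Max (set (dims X))" using n len by (intro Max_ge) auto
  finally show "y \<le> Max (set (dims X))" .
qed simp

lemma subtensor_entry:
  assumes "is_subtensor Y X"
  obtains \<sigma> where "\<And>n j. n < length (dims X) \<Longrightarrow> j < dims Y ! n \<Longrightarrow> \<sigma> n j < dims X ! n"
    and "\<And>is. valid_idx (dims Y) is \<Longrightarrow>
           entry Y is = entry X (map (\<lambda>n. \<sigma> n (is ! n)) [0..<length (dims X)])"
proof -
  from assms obtain \<sigma> where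
    "\<forall>n<length (dims X). strict_mono_on {..<dims Y ! n} (\<sigma> n) \<and> (\<forall>j<dims Y ! n. \<sigma> n j < dims X ! n)"
    "\<forall>is. valid_idx (dims Y) is \<longrightarrow>
           entry Y is = entry X (map (\<lambda>n. \<sigma> n (is ! n)) [0..<length (dims X)])"
    unfolding is_subtensor_def by blast
  then show thesis using that[of \<sigma>] by simp
qed

lemma valid_idx_subtensor:
  assumes "is_subtensor Y X" "valid_idx (dims Y) is"
    and "\<And>n j. n < length (dims X) \<Longrightarrow> j < dims Y ! n \<Longrightarrow> \<sigma> n j < dims X ! n"
  shows "valid_idx (dims X) (map (\<lambda>n. \<sigma> n (is ! n)) [0..<length (dims X)])"
proof -
  have "length (dims Y) = length (dims X)" using assms(1) unfolding is_subtensor_def by simp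
  then show ?thesis using assms(2,3) unfolding valid_idx_def by auto
qed

lemma not_zero_if_subtensor_not_zero:
  assumes S: "is_subtensor Y X" and nz: "\<not> is_zero Y"
  shows "\<not> is_zero X"
proof -
  obtain \<sigma> where \<sigma>: "\<And>is. valid_idx (dims Y) is \<Longrightarrow>
           entry Y is = entry X (map (\<lambda>n. \<sigma> n (is ! n)) [0..<length (dims X)])"
    using subtensor_entry[OF S] by metis
  obtain i where i: "entry Y i \<noteq> 0" using nz unfolding is_zero_def by auto
  have "is_tensor Y" using S unfolding is_subtensor_def by simp
  then have "valid_idx (dims Y) i" using valid_idx_if_entry_nonzero i by blast
  then have "entry X (map (\<lambda>n. \<sigma> n (i ! n)) [0..<length (dims X)]) \<noteq> 0" using \<sigma> i by simp
  then show ?thesis unfolding is_zero_def by blast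
qed

lemma rank_one_subtensor:
  assumes S: "is_subtensor Y X" and r1: "rank_one X" and nz: "\<not> is_zero Y"
  shows "rank_one Y"
proof -
  let ?N = "length (dims X)"
  have TY: "is_tensor Y" and len: "length (dims Y) = ?N" using S unfolding is_subtensor_def by auto
  obtain \<sigma> where \<sigma>: "\<And>n j. n < ?N \<Longrightarrow> j < dims Y ! n \<Longrightarrow> \<sigma> n j < dims X ! n"
    and ent: "\<And>is. valid_idx (dims Y) is \<Longrightarrow> entry Y is = entry X (map (\<lambda>n. \<sigma> n (is ! n)) [0..<?N])"
    using subtensor_entry[OF S] by metis
  obtain a where a: "\<And>is. valid_idx (dims X) is \<Longrightarrow> entry X is = (\<Prod>n<?N. a n (is ! n))"
    using r1 unfolding rank_one_def by blast
  define b where "b n j = a n (\<sigma> n j)" for n j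
  have prod: "entry Y is = (\<Prod>n<?N. b n (is ! n))" if "valid_idx (dims Y) is" for "is"
    using ent[OF that] a[OF valid_idx_subtensor[OF S that \<sigma>]] unfolding b_def by simp
  obtain i where i: "entry Y i \<noteq> 0" using nz unfolding is_zero_def by auto
  have vi: "valid_idx (dims Y) i" using valid_idx_if_entry_nonzero[OF TY i] .
  show ?thesis unfolding rank_one_def
  proof (intro exI[of _ b] conjI allI impI)
    fix n assume n: "n < length (dims Y)"
    have "b n (i ! n) \<noteq> 0" using prod[OF vi] i n len by (simp add: prod_zero_iff)
    moreover have "i ! n < dims Y ! n" using vi n unfolding valid_idx_def by simp
    ultimately show "\<exists>j<dims Y ! n. b n j \<noteq> 0" by blast
  qed (use prod len in simp)
qed

lemma mat_rank_assoc_matrix_subtensor_le: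
  assumes S: "is_subtensor Y X" and n: "n1 \<noteq> n2" "n1 < length (dims X)" "n2 < length (dims X)"
    and modes: "nontrivial_modes X \<subseteq> {n1, n2}"
  shows "mat_rank (assoc_matrix Y n1 n2) \<le> mat_rank (assoc_matrix X n1 n2)"
proof -
  let ?N = "length (dims X)"
  let ?AX = "assoc_matrix X n1 n2"
  have TY: "is_tensor Y" and len: "length (dims Y) = ?N" using S unfolding is_subtensor_def by auto
  obtain \<sigma> where \<sigma>: "\<And>n j. n < ?N \<Longrightarrow> j < dims Y ! n \<Longrightarrow> \<sigma> n j < dims X ! n"
    and ent: "\<And>is. valid_idx (dims Y) is \<Longrightarrow> entry Y is = entry X (map (\<lambda>n. \<sigma> n (is ! n)) [0..<?N])"
    using subtensor_entry[OF S] by metis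
  have "assoc_matrix Y n1 n2 = mat (dims Y ! n1) (dims Y ! n2) (\<lambda>(i, j). ?AX $$ (\<sigma> n1 i, \<sigma> n2 j))"
  proof (rule eq_matI)
    fix i j assume "i < dim_row (mat (dims Y ! n1) (dims Y ! n2) (\<lambda>(i, j). ?AX $$ (\<sigma> n1 i, \<sigma> n2 j)))"
      "j < dim_col (mat (dims Y ! n1) (dims Y ! n2) (\<lambda>(i, j). ?AX $$ (\<sigma> n1 i, \<sigma> n2 j)))"
    then have i: "i < dims Y ! n1" and j: "j < dims Y ! n2" by auto
    let ?is = "(replicate ?N 0)[n1 := i, n2 := j]"
    have v: "valid_idx (dims Y) ?is"
      unfolding valid_idx_def using i j len dims_pos[OF TY] n by (auto simp: nth_list_update)
    have "assoc_matrix Y n1 n2 $$ (i, j) = entry X (map (\<lambda>n. \<sigma> n (?is ! n)) [0..<?N])"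
      using i j len ent[OF v] unfolding assoc_matrix_def by simp
    also have "\<dots> = ?AX $$ (\<sigma> n1 i, \<sigma> n2 j)"
      using entry_eq_assoc_matrix[OF valid_idx_subtensor[OF S v \<sigma>] n modes] n by simp
    finally show "assoc_matrix Y n1 n2 $$ (i, j) =
        mat (dims Y ! n1) (dims Y ! n2) (\<lambda>(i, j). ?AX $$ (\<sigma> n1 i, \<sigma> n2 j)) $$ (i, j)"
      using i j by simp
  qed (auto simp: assoc_matrix_def)
  also have "mat_rank \<dots> \<le> mat_rank ?AX"
    by (rule mat_rank_submatrix_le) (use \<sigma> n in \<open>auto simp: assoc_matrix_def\<close>)
  finally show ?thesis .
qed

section \<open>Diagonal tensors\<close>

lemma dims_diag_tensor [simp]: "dims (diag_tensor M N) = replicate N M"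
  unfolding diag_tensor_def dims_def by simp

lemma entry_diag_tensor:
  "entry (diag_tensor M N) is =
     (if valid_idx (replicate N M) is \<and> (\<forall>k<N. is ! k = is ! 0) then 1 else 0)"
  unfolding diag_tensor_def entry_def by simp

lemma valid_idx_replicate: "valid_idx (replicate N M) is \<longleftrightarrow> length is = N \<and> (\<forall>k<N. is ! k < M)"
  unfolding valid_idx_def by auto

lemma is_tensor_diag_tensor: "1 \<le> M \<Longrightarrow> 1 \<le> N \<Longrightarrow> is_tensor (diag_tensor M N)"
  unfolding is_tensor_def by (auto simp: entry_diag_tensor)

lemma not_zero_diag_tensor: "1 \<le> M \<Longrightarrow> \<not> is_zero (diag_tensor M N)"
  unfolding is_zero_def
  by (intro notI, drule spec[of _ "replicate N 0"]) (auto simp: entry_diag_tensor valid_idx_replicate)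

lemma rank_one_diag_tensor_1: "rank_one (diag_tensor 1 N)"
  unfolding rank_one_def
  by (intro exI[of _ "\<lambda>_ _. 1"]) (auto simp: entry_diag_tensor valid_idx_replicate)

lemma not_rank_one_diag_tensor:
  assumes M: "2 \<le> M" and N: "2 \<le> N"
  shows "\<not> rank_one (diag_tensor M N)"
proof
  assume "rank_one (diag_tensor M N)"
  then obtain a where a: "\<And>is. valid_idx (replicate N M) is \<Longrightarrow>
      entry (diag_tensor M N) is = (\<Prod>n<N. a n (is ! n))"
    unfolding rank_one_def by auto
  have "(\<Prod>n<N. a n i) = 1" if "i < M" for i
    using a[of "replicate N i"] that by (simp add: entry_diag_tensor valid_idx_replicate)
  then have factor_nonzero: "a n i \<noteq> 0" if "n < N" "i < M" for n i
    using that by (metis finite_lessThan lessThan_iff prod_zero_iff zero_neq_one)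
  define off_diag where "off_diag = (replicate N (1::nat))[0 := 0]"
  have "entry (diag_tensor M N) off_diag = 0"
    using N unfolding off_diag_def by (auto simp: entry_diag_tensor valid_idx_replicate intro!: exI[of _ 1])
  then have "(\<Prod>n<N. a n (off_diag ! n)) = 0"
    using a[of off_diag] M unfolding off_diag_def by (simp add: valid_idx_replicate nth_list_update)
  then show False
    using factor_nonzero M unfolding off_diag_def by (auto simp: prod_zero_iff nth_list_update)
qed

lemma assoc_matrix_diag_tensor_2: "assoc_matrix (diag_tensor M 2) 0 1 = 1\<^sub>m M"
  by (rule eq_matI) (auto simp: assoc_matrix_def entry_diag_tensor valid_idx_replicate less_2_cases_iff)

section \<open>Rank functions determined by the nontrivial modes\<close>

text \<open>Hypotheses (1), (3) and (4) of the theorem; hypothesis (2) is needed only for QZC4 and QZC5.\<close>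

locale rank_by_modes =
  fixes r :: "tensor \<Rightarrow> nat"
  assumes zero_iff: "is_tensor X \<Longrightarrow> r X = 0 \<longleftrightarrow> is_zero X"
    and one_iff: "is_tensor X \<Longrightarrow> r X = 1 \<longleftrightarrow> rank_one X"
    and two_modes: "is_tensor X \<Longrightarrow> n1 < n2 \<Longrightarrow> nontrivial_modes X = {n1, n2} \<Longrightarrow>
      r X = mat_rank (assoc_matrix X n1 n2)"
    and many_modes: "is_tensor X \<Longrightarrow> \<not> is_zero X \<Longrightarrow> \<not> rank_one X \<Longrightarrow>
      3 \<le> card (nontrivial_modes X) \<Longrightarrow> r X = Max (set (dims X))"
begin

lemma rank_diag_tensor:
  assumes M: "1 \<le> M" and N: "2 \<le> N"
  shows "r (diag_tensor M N) = M"
proof -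
  have T: "is_tensor (diag_tensor M N)" using is_tensor_diag_tensor M N by simp
  consider "M = 1" | "2 \<le> M" "N = 2" | "2 \<le> M" "3 \<le> N" using M N by linarith
  then show ?thesis
  proof cases
    case 1
    then show ?thesis using one_iff[OF T] rank_one_diag_tensor_1 by simp
  next
    case 2
    then have "nontrivial_modes (diag_tensor M N) = {0, 1}"
      unfolding nontrivial_modes_def by auto
    then show ?thesis
      using two_modes[OF T, of 0 1] 2 assoc_matrix_diag_tensor_2 mat_rank_one_mat by simp
  next
    case 3
    then have "nontrivial_modes (diag_tensor M N) = {..<N}"
      unfolding nontrivial_modes_def by auto
    then show ?thesis
      using many_modes[OF T] 3 M not_zero_diag_tensor not_rank_one_diag_tensor by simp
  qed
qed

lemma rank_le_Max_dims:
  assumes T: "is_tensor X"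
  shows "r X \<le> Max (set (dims X))"
proof -
  have ne: "dims X \<noteq> []" and pos: "\<forall>d\<in>set (dims X). 0 < d" using T unfolding is_tensor_def by auto
  then have Max: "1 \<le> Max (set (dims X))" using Max_in[of "set (dims X)"] by (simp add: Suc_le_eq)
  consider "is_zero X" | "rank_one X" | "\<not> is_zero X" "\<not> rank_one X" by blast
  then show ?thesis
  proof cases
    case 3
    then have two: "2 \<le> card (nontrivial_modes X)" using two_le_card_nontrivial_modes[OF T] by blast
    show ?thesis
    proof (cases "3 \<le> card (nontrivial_modes X)")
      case True
      then show ?thesis using many_modes[OF T 3] by simp
    next
      case False
      then obtain n1 n2 where n: "nontrivial_modes X = {n1, n2}" "n1 < n2"
        using two by (metis card_2_iff le_antisym not_less_eq_eq numeral_2_eq_2 numeral_3_eq_3 linorder_neqE_nat insert_commute)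
      then have "n2 < length (dims X)" unfolding nontrivial_modes_def by auto
      have "r X = mat_rank (assoc_matrix X n1 n2)" using two_modes[OF T n(2,1)] .
      also have "\<dots> \<le> dims X ! n2" using mat_rank_le_dim_col[of "assoc_matrix X n1 n2"] by (simp add: assoc_matrix_def)
      also have "\<dots> \<le> Max (set (dims X))" using \<open>n2 < length (dims X)\<close> by (intro Max_ge) auto
      finally show ?thesis .
    qed
  qed (use zero_iff[OF T] one_iff[OF T] Max in auto)
qed

lemma rank_eq_mat_rank_leading_modes:
  assumes T: "is_tensor X" and L: "2 \<le> length (dims X)"
    and ones: "\<forall>k. 2 \<le> k \<longrightarrow> k < length (dims X) \<longrightarrow> dims X ! k = 1"
  shows "r X = mat_rank (assoc_matrix X 0 1)"
proof -
  let ?A = "assoc_matrix X 0 1"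
  have modes: "nontrivial_modes X \<subseteq> {0, 1}"
  proof
    fix n assume "n \<in> nontrivial_modes X"
    then have "\<not> 2 \<le> n" using ones unfolding nontrivial_modes_def by fastforce
    then show "n \<in> {0, 1}" by auto
  qed
  show ?thesis
  proof (cases "nontrivial_modes X = {0, 1}")
    case True
    then show ?thesis using two_modes[OF T, of 0 1] by simp
  next
    case False
    then have "dims X ! 0 = 1 \<or> dims X ! 1 = 1"
      using L dims_pos[OF T, of 0] dims_pos[OF T, of 1] modes unfolding nontrivial_modes_def by force
    then have thin: "dim_row ?A = 1 \<or> dim_col ?A = 1" unfolding assoc_matrix_def by simp
    have leading: "0 < length (dims X)" "1 < length (dims X)" using L by auto
    show ?thesis
    proof (cases "is_zero X")
      case True
      then have "mat_rank ?A = 0" by (intro mat_rank_eq_0) (simp add: assoc_matrix_def is_zero_def)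
      then show ?thesis using zero_iff[OF T] True by simp
    next
      case nz: False
      have "card (nontrivial_modes X) < 2"
        using psubset_card_mono[of "{0, 1}" "nontrivial_modes X"] modes False by fastforce
      then have "r X = 1" using one_iff[OF T] two_le_card_nontrivial_modes[OF T nz] by fastforce
      obtain i0 where i0: "entry X i0 \<noteq> 0" using nz unfolding is_zero_def by auto
      have v0: "valid_idx (dims X) i0" using valid_idx_if_entry_nonzero[OF T i0] .
      then have "?A $$ (i0 ! 0, i0 ! 1) \<noteq> 0"
        using entry_eq_assoc_matrix[OF v0 _ leading modes] i0 by simp
      moreover have "i0 ! 0 < dim_row ?A" "i0 ! 1 < dim_col ?A"
        using v0 leading unfolding valid_idx_def assoc_matrix_def by auto
      ultimately have "1 \<le> mat_rank ?A" using one_le_mat_rank by blast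
      then show ?thesis using mat_rank_le_1[OF thin] \<open>r X = 1\<close> by simp
    qed
  qed
qed

lemma rank_subtensor_le:
  assumes T: "is_tensor X" and S: "is_subtensor Y X"
  shows "r Y \<le> r X"
proof -
  have TY: "is_tensor Y" using S unfolding is_subtensor_def by simp
  consider "is_zero Y" | "\<not> is_zero Y" "rank_one Y" | "\<not> is_zero Y" "\<not> rank_one Y" by blast
  then show ?thesis
  proof cases
    case 1
    then show ?thesis using zero_iff[OF TY] by simp
  next
    case 2
    then have "r Y = 1" using one_iff[OF TY] by simp
    moreover have "r X \<noteq> 0" using zero_iff[OF T] not_zero_if_subtensor_not_zero[OF S 2(1)] by simp
    ultimately show ?thesis by simp
  next
    case 3
    have nzX: "\<not> is_zero X" using not_zero_if_subtensor_not_zero[OF S 3(1)] .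
    have nrX: "\<not> rank_one X" using rank_one_subtensor[OF S] 3 by blast
    have modes: "nontrivial_modes Y \<subseteq> nontrivial_modes X" using nontrivial_modes_subtensor[OF S] .
    have two: "2 \<le> card (nontrivial_modes Y)" using two_le_card_nontrivial_modes[OF TY 3] .
    show ?thesis
    proof (cases "3 \<le> card (nontrivial_modes X)")
      case True
      have "r Y \<le> Max (set (dims Y))" using rank_le_Max_dims[OF TY] .
      also have "\<dots> \<le> Max (set (dims X))" using Max_dims_subtensor_le[OF S] .
      also have "\<dots> = r X" using many_modes[OF T nzX nrX True] by simp
      finally show ?thesis .
    next
      case False
      then have same: "nontrivial_modes Y = nontrivial_modes X"
        using two card_seteq[OF finite_nontrivial_modes modes] by simp
      have "card (nontrivial_modes Y) = 2" using False two same by simp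
      then obtain n1 n2 where n: "n1 < n2" "nontrivial_modes Y = {n1, n2}"
        using card_2_obtain_less by blast
      then have "n1 < length (dims X)" "n2 < length (dims X)"
        using same unfolding nontrivial_modes_def by auto
      then have "mat_rank (assoc_matrix Y n1 n2) \<le> mat_rank (assoc_matrix X n1 n2)"
        using mat_rank_assoc_matrix_subtensor_le[OF S] n same by simp
      then show ?thesis using two_modes[OF TY n] two_modes[OF T n(1)] n(2) same by simp
    qed
  qed
qed

end

theorem proposition3p9:
  fixes r :: "tensor \<Rightarrow> nat"
  assumes h1: "\<forall>X. is_tensor X \<longrightarrow> ((r X = 0 \<longleftrightarrow> is_zero X) \<and> (r X = 1 \<longleftrightarrow> rank_one X))"
    and h2: "\<forall>X Y. tsim X Y \<longrightarrow> r X = r Y"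
    and h3: "\<forall>X n1 n2. is_tensor X \<longrightarrow> n1 < n2 \<longrightarrow> n2 < length (dims X) \<longrightarrow>
               {n. n < length (dims X) \<and> 1 < dims X ! n} = {n1, n2} \<longrightarrow>
               r X = mat_rank (assoc_matrix X n1 n2)"
    and h4: "\<forall>X. is_tensor X \<longrightarrow> \<not> is_zero X \<longrightarrow> \<not> rank_one X \<longrightarrow>
               3 \<le> card {n. n < length (dims X) \<and> 1 < dims X ! n} \<longrightarrow>
               r X = Max (set (dims X))"
  shows "qzc_rank r"
proof -
  interpret rank_by_modes r
  proof
    fix X n1 n2
    assume "is_tensor X" "n1 < n2" "nontrivial_modes X = {n1, n2}"
    moreover from this(3) have "n2 < length (dims X)" unfolding nontrivial_modes_def by blast
    ultimately show "r X = mat_rank (assoc_matrix X n1 n2)" using h3 unfolding nontrivial_modes_def by blast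
  next
    fix X assume "is_tensor X" "\<not> is_zero X" "\<not> rank_one X" "3 \<le> card (nontrivial_modes X)"
    then show "r X = Max (set (dims X))" using h4 unfolding nontrivial_modes_def by blast
  qed (use h1 in blast)+
  show ?thesis
    unfolding qzc_rank_def
  proof (intro conjI allI impI)
    show "r (scale_tensor \<alpha> X) = r X" if "is_tensor X" "\<alpha> \<noteq> 0" for X \<alpha>
      using h2 tsim_scale[OF that] by metis
    show "r Y = r X" if "is_tensor X" "is_mode_perm Y X" for X Y
      using h2 tsim_perm[OF that] by metis
  qed (use h1 rank_diag_tensor rank_eq_mat_rank_leading_modes rank_subtensor_le in auto)
qed

end
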